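(* Let $G=(Q,A,\delta)$ be an MDP, $q\in Q$, reals $a<0<b$ and $a\le\eta\le0$, and let $v$ be an $[a,b]$-valuation that is $\eta$-bounded with respect to some $\mathrm{NZ}\subseteq Q\times A$. For $n\in\mathbb N$ and $M\ge0$ define $f^{n,M}_v$ on infinite runs by $f^{n,M}_v(\rho)=s^n_v(\rho)$ if $c^n_v(\rho)=n$ and $f^{n,M}_v(\rho)=-M$ otherwise. Then for all $s>0$, $n\in\mathbb N$, $M\ge0$ and every strategy $\sigma$, $$\mathbb E^\sigma_q\big[G,\exp(s(f^{n,M}_v-n\eta))\big]\le\exp\Big(n\frac{s^2(b-a)^2}{8}\Big)+n\exp\Big(s(-M+n\max(|a|,|b|))+n\frac{s^2(b-a)^2}{8}\Big).$$
   Context: An MDP $G=(Q,A,\delta)$ has finite non-empty $Q,A$ and $\delta:Q\times A\to\mathcal D(Q)$; strategies are maps $\sigma:Q\cdot(A\cdot Q)^*\to\mathcal D(A)$, and $\mathbb P^\sigma_q[G,\cdot]$ (with expectation $\mathbb E^\sigma_q[G,\cdot]$) is the induced probability measure on infinite runs $(Q\cdot A)^\omega$ from $q$. An $[a,b]$-valuation is a function $v:Q\cdot(A\cdot Q)^*\to[a,b]$. It is $\eta$-bounded w.r.t. $\mathrm{NZ}\subseteq Q\times A$ if for every finite run $\rho$ with last state $\mathrm{last}(\rho)$ and every action $\alpha$: if $(\mathrm{last}(\rho),\alpha)\notin\mathrm{NZ}$ then $v(\rho\cdot(\alpha,q'))=0$ for all $q'\in Q$; if $(\mathrm{last}(\rho),\alpha)\in\mathrm{NZ}$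 then $\sum_{q'}\delta(\mathrm{last}(\rho),\alpha)(q')\,v(\rho\cdot(\alpha,q'))\le\eta$. For an infinite run $\rho=(q_0,a_0)(q_1,a_1)\cdots$, let $\mathrm{IndNZ}(\rho)=\{i:(q_i,a_i)\in\mathrm{NZ}\}$ and $\mathrm{IndNZ}^n(\rho)$ its $\min(n,|\mathrm{IndNZ}(\rho)|)$ smallest elements; $s^n_v(\rho):=\sum_{i\in\mathrm{IndNZ}^n(\rho)}v(q_0(a_0,q_1)\cdots(a_i,q_{i+1}))$ and $c^n_v(\rho):=|\mathrm{IndNZ}^n(\rho)|$. *)

theory Defs
  imports "HOL-Probability.Probability"
begin

text \<open>MDP G = (Q, A, delta): Q = UNIV of a finite type 'q, A = UNIV of a finite type 'a
 (nonempty automatically), delta :: 'q => 'a => 'q pmf.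
 Finite runs Q (A Q)^* are pairs (q0, [(a0,q1),...,(a_{k-1},q_k)]).
 Infinite runs (Q A)^omega are streams of (state, action) pairs.\<close>

type_synonym ('q,'a) fin_run = "'q \<times> ('a \<times> 'q) list"

definition last_state :: "('q,'a) fin_run \<Rightarrow> 'q" where
  "last_state h = (if snd h = [] then fst h else snd (last (snd h)))"

text \<open>History (finite run) just before choosing action number j, read off a list of
 (state, action) pairs xs: q0 (a0,q1) ... (a_{j-1},q_j).\<close>
definition hist_of :: "('q \<times> 'a) list \<Rightarrow> nat \<Rightarrow> ('q,'a) fin_run" where
  "hist_of xs j = (fst (xs ! 0), map (\<lambda>i. (snd (xs ! i), fst (xs ! Suc i))) [0..<j])"

text \<open>Probability, under strategy sigma from initial state q, that an infinite run starts
 with the finite sequence xs = (q0,a0)...(q_{k-1},a_{k-1}) of state/action pairs.\<close>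
definition prefix_prob ::
  "('q \<Rightarrow> 'a \<Rightarrow> 'q pmf) \<Rightarrow> (('q,'a) fin_run \<Rightarrow> 'a pmf) \<Rightarrow> 'q \<Rightarrow> ('q \<times> 'a) list \<Rightarrow> real" where
  "prefix_prob \<delta> \<sigma> q xs =
     (if xs = [] then 1 else
       (if fst (xs ! 0) = q then 1 else 0)
       * (\<Prod>j<length xs. pmf (\<sigma> (hist_of xs j)) (snd (xs ! j)))
       * (\<Prod>j<length xs - 1. pmf (\<delta> (fst (xs ! j)) (snd (xs ! j))) (fst (xs ! Suc j))))"

text \<open>P is the probability measure P^sigma_q[G, .] on infinite runs: a probability measure on
 the product sigma-algebra of streams whose values on all cylinder sets are those prescribed
 by the strategy and the transition function (this determines it uniquely).\<close>
definition induced_measure ::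
  "('q \<Rightarrow> 'a \<Rightarrow> 'q pmf) \<Rightarrow> (('q,'a) fin_run \<Rightarrow> 'a pmf) \<Rightarrow> 'q \<Rightarrow> ('q \<times> 'a) stream measure \<Rightarrow> bool" where
  "induced_measure \<delta> \<sigma> q P \<longleftrightarrow>
     prob_space P \<and> sets P = sets (stream_space (count_space UNIV)) \<and>
     (\<forall>xs. measure P {\<omega> \<in> space P. stake (length xs) \<omega> = xs} = prefix_prob \<delta> \<sigma> q xs)"

definition eta_bounded ::
  "('q \<Rightarrow> 'a \<Rightarrow> 'q pmf) \<Rightarrow> real \<Rightarrow> ('q \<times> 'a) set \<Rightarrow> (('q,'a) fin_run \<Rightarrow> real) \<Rightarrow> bool" where
  "eta_bounded \<delta> \<eta> NZ v \<longleftrightarrow>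
     (\<forall>\<rho> \<alpha>. (last_state \<rho>, \<alpha>) \<notin> NZ \<longrightarrow> (\<forall>q'. v (fst \<rho>, snd \<rho> @ [(\<alpha>, q')]) = 0)) \<and>
     (\<forall>\<rho> \<alpha>. (last_state \<rho>, \<alpha>) \<in> NZ \<longrightarrow>
        (\<Sum>q'\<in>UNIV. pmf (\<delta> (last_state \<rho>) \<alpha>) q' * v (fst \<rho>, snd \<rho> @ [(\<alpha>, q')])) \<le> \<eta>)"

text \<open>Prefix q0 (a0,q1) ... (ai,q_{i+1}) of an infinite run.\<close>
definition run_prefix :: "('q \<times> 'a) stream \<Rightarrow> nat \<Rightarrow> ('q,'a) fin_run" where
  "run_prefix \<rho> i = (fst (\<rho> !! 0), map (\<lambda>j. (snd (\<rho> !! j), fst (\<rho> !! Suc j))) [0..<Suc i])"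

definition IndNZ :: "('q \<times> 'a) set \<Rightarrow> ('q \<times> 'a) stream \<Rightarrow> nat set" where
  "IndNZ NZ \<rho> = {i. \<rho> !! i \<in> NZ}"

definition IndNZn :: "('q \<times> 'a) set \<Rightarrow> nat \<Rightarrow> ('q \<times> 'a) stream \<Rightarrow> nat set" where
  "IndNZn NZ n \<rho> = {i \<in> IndNZ NZ \<rho>. card {j \<in> IndNZ NZ \<rho>. j < i} < n}"

definition s_v :: "('q \<times> 'a) set \<Rightarrow> (('q,'a) fin_run \<Rightarrow> real) \<Rightarrow> nat \<Rightarrow> ('q \<times> 'a) stream \<Rightarrow> real" where
  "s_v NZ v n \<rho> = (\<Sum>i\<in>IndNZn NZ n \<rho>. v (run_prefix \<rho> i))"

definition c_v :: "('q \<times> 'a) set \<Rightarrow> nat \<Rightarrow> ('q \<times> 'a) stream \<Rightarrow> nat" where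
  "c_v NZ n \<rho> = card (IndNZn NZ n \<rho>)"

definition f_v :: "('q \<times> 'a) set \<Rightarrow> (('q,'a) fin_run \<Rightarrow> real) \<Rightarrow> nat \<Rightarrow> real \<Rightarrow> ('q \<times> 'a) stream \<Rightarrow> real" where
  "f_v NZ v n M \<rho> = (if c_v NZ n \<rho> = n then s_v NZ v n \<rho> else - M)"

end

(*
  Along the first n steps of a run that lie in NZ, the valuation of each step has conditional
  mean at most eta given the history, and takes values in [a, b]. Hoeffding's lemma therefore
  makes Z = exp (sum over these steps of s (v - eta) - s^2 (b - a)^2 / 8) a supermartingale
  with expectation at most 1. On runs with n such steps exp (s (f - n eta)) equals
  exp (n s^2 (b - a)^2 / 8) Z; on the others it is exp (s (-M - n eta)), and n >= 1 there.
  Truncating at time T turns the integrand into a function of a finite prefix, which is a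
  finite sum over cylinders; the truncations are uniformly bounded and eventually equal to
  the integrand, so dominated convergence transfers the bound.
*)

theory Submission
  imports Defs
begin

context interval_bounded_random_variable
begin

lemma Hoeffdings_lemma_integral_le:
  assumes "l > 0" and mean: "expectation f \<le> \<eta>"
  shows "expectation (\<lambda>x. exp (l * (f x - \<eta>))) \<le> exp (l\<^sup>2 * (b - a)\<^sup>2 / 8)"
proof -
  define \<mu> where "\<mu> = expectation f"
  have "AE x in M. norm (exp (l * (f x - \<mu>))) \<le> exp (l * (b - \<mu>))"
    using AE_in_interval by eventually_elim (use \<open>l > 0\<close> in auto)
  then have int: "integrable M (\<lambda>x. exp (l * (f x - \<mu>)))"
    by (intro integrable_const_bound) auto
  have "ennreal (expectation (\<lambda>x. exp (l * (f x - \<mu>))))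
      = nn_integral M (\<lambda>x. exp (l * (f x - \<mu>)))"
    by (rule nn_integral_eq_integral[OF int, symmetric]) auto
  also have "\<dots> \<le> ennreal (exp (l\<^sup>2 * (b - a)\<^sup>2 / 8))"
    unfolding \<mu>_def by (rule Hoeffdings_lemma_nn_integral[OF \<open>l > 0\<close>])
  finally have centred: "expectation (\<lambda>x. exp (l * (f x - \<mu>))) \<le> exp (l\<^sup>2 * (b - a)\<^sup>2 / 8)"
    by (simp add: ennreal_le_iff)
  have "expectation (\<lambda>x. exp (l * (f x - \<eta>)))
      = expectation (\<lambda>x. exp (l * (\<mu> - \<eta>)) * exp (l * (f x - \<mu>)))"
    by (simp add: exp_add[symmetric] algebra_simps)
  also have "\<dots> = exp (l * (\<mu> - \<eta>)) * expectation (\<lambda>x. exp (l * (f x - \<mu>)))"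
    by (rule integral_mult_right_zero)
  also have "\<dots> \<le> 1 * exp (l\<^sup>2 * (b - a)\<^sup>2 / 8)"
    using centred mean \<open>l > 0\<close> unfolding \<mu>_def[symmetric]
    by (intro mult_mono) (auto simp: mult_le_0_iff integral_nonneg)
  finally show ?thesis by simp
qed

end

lemma sum_pmf_exp_deviation_le_1:
  fixes D :: "'x::finite pmf" and X :: "'x \<Rightarrow> real"
  assumes range: "\<And>x. X x \<in> {a..b}" and mean: "(\<Sum>x\<in>UNIV. pmf D x * X x) \<le> \<eta>" and "l > 0"
  shows "(\<Sum>x\<in>UNIV. pmf D x * exp (l * (X x - \<eta>) - l\<^sup>2 * (b - a)\<^sup>2 / 8)) \<le> 1"
proof -
  interpret interval_bounded_random_variable "measure_pmf D" X a b
    by unfold_locales (use range in auto)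
  have pmf_integral: "measure_pmf.expectation D g = (\<Sum>x\<in>UNIV. pmf D x * g x)" for g
    by (subst integral_measure_pmf_real[where A = UNIV]) (auto simp: mult.commute)
  have "(\<Sum>x\<in>UNIV. pmf D x * exp (l * (X x - \<eta>) - l\<^sup>2 * (b - a)\<^sup>2 / 8))
      = (\<Sum>x\<in>UNIV. pmf D x * exp (l * (X x - \<eta>))) / exp (l\<^sup>2 * (b - a)\<^sup>2 / 8)"
    by (simp add: exp_diff sum_divide_distrib)
  also have "\<dots> \<le> 1"
    using Hoeffdings_lemma_integral_le[OF \<open>l > 0\<close>, of \<eta>] mean by (simp add: pmf_integral)
  finally show ?thesis .
qed

lemma hist_of_append: "j < length ys \<Longrightarrow> hist_of (ys @ zs) j = hist_of ys j"
  unfolding hist_of_def by (auto simp: nth_append)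

lemma hist_of_snoc:
  "length ys = Suc N \<Longrightarrow>
   hist_of (ys @ [(q', a')]) (Suc N) = (fst (hist_of ys N), snd (hist_of ys N) @ [(snd (ys ! N), q')])"
  unfolding hist_of_def by (auto simp: nth_append)

lemma last_state_hist_of: "N < length ys \<Longrightarrow> last_state (hist_of ys N) = fst (ys ! N)"
  unfolding hist_of_def last_state_def by (cases N) (auto simp: last_map)

lemma prefix_prob_nonneg: "prefix_prob \<delta> \<sigma> q xs \<ge> 0"
  by (simp add: prefix_prob_def prod_nonneg)

lemma prefix_prob_snoc:
  assumes len: "length ys = Suc N"
  shows "prefix_prob \<delta> \<sigma> q (ys @ [p]) = prefix_prob \<delta> \<sigma> q ys
     * pmf (\<delta> (fst (ys ! N)) (snd (ys ! N))) (fst p) * pmf (\<sigma> (hist_of (ys @ [p]) (Suc N))) (snd p)"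
proof -
  have strategy: "(\<Prod>j<Suc (Suc N). pmf (\<sigma> (hist_of (ys @ [p]) j)) (snd ((ys @ [p]) ! j)))
      = (\<Prod>j<Suc N. pmf (\<sigma> (hist_of ys j)) (snd (ys ! j))) * pmf (\<sigma> (hist_of (ys @ [p]) (Suc N))) (snd p)"
    using len by (simp add: nth_append hist_of_append)
  have transition: "(\<Prod>j<Suc N. pmf (\<delta> (fst ((ys @ [p]) ! j)) (snd ((ys @ [p]) ! j))) (fst ((ys @ [p]) ! Suc j)))
      = (\<Prod>j<N. pmf (\<delta> (fst (ys ! j)) (snd (ys ! j))) (fst (ys ! Suc j)))
        * pmf (\<delta> (fst (ys ! N)) (snd (ys ! N))) (fst p)"
    using len by (simp add: nth_append)
  show ?thesis
    unfolding prefix_prob_def length_append_singleton len diff_Suc_1 strategy transition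
    using len by (auto simp: nth_append)
qed

lemma sum_lists_length_Suc:
  fixes f :: "'b::finite list \<Rightarrow> 'c::comm_monoid_add"
  shows "(\<Sum>xs | length xs = Suc N. f xs) = (\<Sum>ys | length ys = N. \<Sum>p\<in>UNIV. f (ys @ [p]))"
proof -
  have snoc_image: "{xs::'b list. length xs = Suc N} = (\<lambda>(ys, p). ys @ [p]) ` ({ys. length ys = N} \<times> UNIV)"
  proof (intro equalityI subsetI)
    fix xs :: "'b list" assume "xs \<in> {xs. length xs = Suc N}"
    then have "xs = butlast xs @ [last xs]" "length (butlast xs) = N"
      by (auto intro: append_butlast_last_id[symmetric])
    then show "xs \<in> (\<lambda>(ys, p). ys @ [p]) ` ({ys. length ys = N} \<times> UNIV)"
      by (auto intro!: image_eqI[of _ _ "(butlast xs, last xs)"])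
  qed auto
  have "inj_on (\<lambda>(ys, p). ys @ [p]) ({ys::'b list. length ys = N} \<times> UNIV)"
    by (auto simp: inj_on_def)
  then show ?thesis
    unfolding snoc_image sum.reindex[OF \<open>inj_on _ _\<close>]
    by (simp add: sum.cartesian_product split_beta finite_list_length)
qed

lemma measurable_stake_induced_measure:
  fixes P :: "('q::countable \<times> 'a::countable) stream measure"
  assumes "induced_measure \<delta> \<sigma> q P"
  shows "stake N \<in> measurable P (count_space UNIV)"
proof -
  have sets: "sets P = sets (stream_space (count_space UNIV))"
    using assms by (simp add: induced_measure_def)
  show ?thesis
    unfolding measurable_cong_sets[OF sets refl] by (rule measurable_stake)
qed

lemma integral_stake_eq_sum:
  fixes P :: "('q::finite \<times> 'a::finite) stream measure" and g :: "('q \<times> 'a) list \<Rightarrow> real"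
  assumes "induced_measure \<delta> \<sigma> q P"
  shows "(\<integral>\<omega>. g (stake N \<omega>) \<partial>P) = (\<Sum>xs | length xs = N. g xs * prefix_prob \<delta> \<sigma> q xs)"
proof -
  have "prob_space P"
    and cylinder: "\<And>xs. measure P {\<omega> \<in> space P. stake (length xs) \<omega> = xs} = prefix_prob \<delta> \<sigma> q xs"
    using assms unfolding induced_measure_def by auto
  interpret prob_space P by fact
  define C where "C xs = {\<omega> \<in> space P. stake N \<omega> = xs}" for xs
  have "stake N \<in> measurable P (count_space UNIV)"
    using assms by (rule measurable_stake_induced_measure)
  then have C_sets: "C xs \<in> sets P" for xs
    using measurable_sets[of _ P _ "{xs}"] by (simp add: C_def vimage_def Int_def conj_commute)
  have "(\<integral>\<omega>. g (stake N \<omega>) \<partial>P) = (\<integral>\<omega>. (\<Sum>xs | length xs = N. g xs * indicator (C xs) \<omega>) \<partial>P)"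
  proof (rule Bochner_Integration.integral_cong[OF refl])
    fix \<omega> assume "\<omega> \<in> space P"
    then have "(\<Sum>xs | length xs = N. g xs * indicator (C xs) \<omega>)
        = (\<Sum>xs | length xs = N. if stake N \<omega> = xs then g xs else 0)"
      by (intro sum.cong) (auto simp: C_def)
    also have "\<dots> = g (stake N \<omega>)"
      by (simp add: sum.delta finite_list_length)
    finally show "g (stake N \<omega>) = (\<Sum>xs | length xs = N. g xs * indicator (C xs) \<omega>)" ..
  qed
  also have "\<dots> = (\<Sum>xs | length xs = N. g xs * measure P (C xs))"
    using C_sets by (subst Bochner_Integration.integral_sum)
      (auto intro!: integrable_real_indicator simp: emeasure_eq_measure)
  also have "\<dots> = (\<Sum>xs | length xs = N. g xs * prefix_prob \<delta> \<sigma> q xs)"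
    using cylinder by (intro sum.cong) (auto simp: C_def)
  finally show ?thesis .
qed

lemma sum_prefix_prob_eq_1:
  fixes P :: "('q::finite \<times> 'a::finite) stream measure"
  assumes "induced_measure \<delta> \<sigma> q P"
  shows "(\<Sum>xs | length xs = N. prefix_prob \<delta> \<sigma> q xs) = 1"
proof -
  interpret prob_space P
    using assms unfolding induced_measure_def by auto
  show ?thesis
    using integral_stake_eq_sum[OF assms, of "\<lambda>_. 1" N] prob_space by simp
qed

(* The list version of IndNZn, restricted to positions below T; meaningful for T \<le> length xs. *)
definition prefix_IndNZn :: "('q \<times> 'a) set \<Rightarrow> nat \<Rightarrow> nat \<Rightarrow> ('q \<times> 'a) list \<Rightarrow> nat set" where
  "prefix_IndNZn NZ n T xs = {i. i < T \<and> xs ! i \<in> NZ \<and> card {j. j < i \<and> xs ! j \<in> NZ} < n}"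

lemma finite_prefix_IndNZn: "finite (prefix_IndNZn NZ n T xs)"
  by (rule finite_subset[of _ "{..<T}"]) (auto simp: prefix_IndNZn_def)

lemma prefix_IndNZn_0 [simp]: "prefix_IndNZn NZ 0 T xs = {}"
  by (simp add: prefix_IndNZn_def)

lemma prefix_IndNZn_append:
  "T \<le> length ys \<Longrightarrow> prefix_IndNZn NZ n T (ys @ zs) = prefix_IndNZn NZ n T ys"
proof -
  assume "T \<le> length ys"
  then have nth: "(ys @ zs) ! i = ys ! i" if "i < T" for i
    using that by (simp add: nth_append)
  then have "{j. j < i \<and> (ys @ zs) ! j \<in> NZ} = {j. j < i \<and> ys ! j \<in> NZ}" if "i < T" for i
    using that by auto
  with nth show ?thesis
    by (auto simp: prefix_IndNZn_def)
qed

lemma prefix_IndNZn_Suc: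
  "prefix_IndNZn NZ n (Suc N) xs =
     (if N \<in> prefix_IndNZn NZ n (Suc N) xs then insert N (prefix_IndNZn NZ n N xs)
      else prefix_IndNZn NZ n N xs)"
  by (auto simp: prefix_IndNZn_def less_Suc_eq)

lemma prefix_IndNZn_stake: "prefix_IndNZn NZ n T (stake (Suc T) \<rho>) = IndNZn NZ n \<rho> \<inter> {..<T}"
proof -
  have "{j. j < i \<and> stake (Suc T) \<rho> ! j \<in> NZ} = {j \<in> IndNZ NZ \<rho>. j < i}" if "i < T" for i
    using that by (auto simp: IndNZ_def stake_nth simp del: stake.simps)
  then show ?thesis
    by (auto simp: prefix_IndNZn_def IndNZn_def IndNZ_def stake_nth simp del: stake.simps)
qed

lemma finite_IndNZn: "finite (IndNZn NZ n \<rho>)"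
proof -
  define rank where "rank i = card {j \<in> IndNZ NZ \<rho>. j < i}" for i
  have "strict_mono_on (IndNZ NZ \<rho>) rank"
  proof (rule strict_mono_onI)
    fix i i' assume "i \<in> IndNZ NZ \<rho>" "i < i'"
    then have "{j \<in> IndNZ NZ \<rho>. j < i} \<subset> {j \<in> IndNZ NZ \<rho>. j < i'}" by auto
    then show "rank i < rank i'"
      unfolding rank_def by (rule psubset_card_mono[rotated]) auto
  qed
  then have "inj_on rank (IndNZn NZ n \<rho>)"
    by (rule strict_mono_on_imp_inj_on[OF monotone_on_subset]) (auto simp: IndNZn_def)
  moreover have "rank ` IndNZn NZ n \<rho> \<subseteq> {..<n}"
    by (auto simp: IndNZn_def rank_def)
  ultimately show ?thesis
    by (meson finite_imageD finite_lessThan finite_subset)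
qed

(* Evaluated on prefixes of length Suc T: the last pair supplies the successor state of step T - 1. *)
definition prefix_payoff ::
  "('q \<times> 'a) set \<Rightarrow> (('q,'a) fin_run \<Rightarrow> real) \<Rightarrow> nat \<Rightarrow> real \<Rightarrow> nat \<Rightarrow> ('q \<times> 'a) list \<Rightarrow> real" where
  "prefix_payoff NZ v n M T xs =
     (if card (prefix_IndNZn NZ n T xs) = n
      then \<Sum>i\<in>prefix_IndNZn NZ n T xs. v (hist_of xs (Suc i)) else - M)"

lemma hist_of_stake: "i < T \<Longrightarrow> hist_of (stake (Suc T) \<rho>) (Suc i) = run_prefix \<rho> i"
  unfolding hist_of_def run_prefix_def by (auto simp: stake_nth simp del: stake.simps)

lemma eventually_prefix_payoff_stake:
  "eventually (\<lambda>T. prefix_payoff NZ v n M T (stake (Suc T) \<rho>) = f_v NZ v n M \<rho>) sequentially"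
proof -
  obtain k where k: "IndNZn NZ n \<rho> \<subseteq> {..<k}"
    using finite_nat_bounded[OF finite_IndNZn] by blast
  have "prefix_payoff NZ v n M T (stake (Suc T) \<rho>) = f_v NZ v n M \<rho>" if "k \<le> T" for T
  proof -
    have "prefix_IndNZn NZ n T (stake (Suc T) \<rho>) = IndNZn NZ n \<rho>"
      using k that by (auto simp: prefix_IndNZn_stake simp del: stake.simps)
    moreover have "(\<Sum>i\<in>IndNZn NZ n \<rho>. v (hist_of (stake (Suc T) \<rho>) (Suc i))) = s_v NZ v n \<rho>"
      unfolding s_v_def using k that by (intro sum.cong) (auto simp: hist_of_stake simp del: stake.simps)
    ultimately show ?thesis
      by (simp add: prefix_payoff_def f_v_def c_v_def)
  qed
  then show ?thesis
    unfolding eventually_sequentially by blast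
qed

lemma integral_le_of_eventually_eq:
  fixes F :: "'x \<Rightarrow> real" and G :: "nat \<Rightarrow> 'x \<Rightarrow> real"
  assumes "finite_measure M"
    and measurable: "\<And>T. G T \<in> borel_measurable M"
    and bounded: "\<And>T x. \<bar>G T x\<bar> \<le> C"
    and eventually_eq: "\<And>x. eventually (\<lambda>T. G T x = F x) sequentially"
    and integral_le: "\<And>T. integral\<^sup>L M (G T) \<le> B"
  shows "integral\<^sup>L M F \<le> B"
proof -
  interpret finite_measure M by fact
  have lim: "(\<lambda>T. G T x) \<longlonglongrightarrow> F x" for x
    using eventually_eq by (rule tendsto_eventually)
  have "(\<lambda>T. integral\<^sup>L M (G T)) \<longlonglongrightarrow> integral\<^sup>L M F"
  proof (rule integral_dominated_convergence[where w = "\<lambda>_. C"])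
    show "F \<in> borel_measurable M"
      using lim measurable by (rule borel_measurable_LIMSEQ_real)
  qed (use measurable bounded lim in simp_all)
  then show ?thesis
    using integral_le by (intro LIMSEQ_le_const2) auto
qed

locale eta_bounded_valuation =
  fixes \<delta> :: "'q::finite \<Rightarrow> 'a::finite \<Rightarrow> 'q pmf" and NZ :: "('q \<times> 'a) set"
    and v :: "('q,'a) fin_run \<Rightarrow> real" and a b \<eta> :: real
  assumes valuation_range: "\<And>h. v h \<in> {a..b}"
    and eta_bounded: "eta_bounded \<delta> \<eta> NZ v"
begin

abbreviation hoeffding_exponent :: "real \<Rightarrow> real" where
  "hoeffding_exponent s \<equiv> s\<^sup>2 * (b - a)\<^sup>2 / 8"

lemma sum_exp_valuation_step_le_1:
  assumes "(last_state h, \<alpha>) \<in> NZ" and "s > 0"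
  shows "(\<Sum>q'\<in>UNIV. pmf (\<delta> (last_state h) \<alpha>) q'
           * exp (s * (v (fst h, snd h @ [(\<alpha>, q')]) - \<eta>) - hoeffding_exponent s)) \<le> 1"
proof (rule sum_pmf_exp_deviation_le_1[OF valuation_range _ \<open>s > 0\<close>])
  show "(\<Sum>q'\<in>UNIV. pmf (\<delta> (last_state h) \<alpha>) q' * v (fst h, snd h @ [(\<alpha>, q')])) \<le> \<eta>"
    using assms(1) eta_bounded unfolding eta_bounded_def by blast
qed

definition exp_supermartingale :: "real \<Rightarrow> nat \<Rightarrow> nat \<Rightarrow> ('q \<times> 'a) list \<Rightarrow> real" where
  "exp_supermartingale s n T xs =
     exp (\<Sum>i\<in>prefix_IndNZn NZ n T xs. s * (v (hist_of xs (Suc i)) - \<eta>) - hoeffding_exponent s)"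

lemma exp_supermartingale_nonneg: "exp_supermartingale s n T xs \<ge> 0"
  by (simp add: exp_supermartingale_def)

lemma exp_supermartingale_0 [simp]: "exp_supermartingale s n 0 xs = 1"
  by (simp add: exp_supermartingale_def prefix_IndNZn_def)

lemma exp_supermartingale_snoc:
  assumes len: "length ys = Suc N"
  shows "exp_supermartingale s n (Suc N) (ys @ [(q', a')]) = exp_supermartingale s n N ys *
     (if N \<in> prefix_IndNZn NZ n (Suc N) ys
      then exp (s * (v (fst (hist_of ys N), snd (hist_of ys N) @ [(snd (ys ! N), q')]) - \<eta>)
                - hoeffding_exponent s)
      else 1)"
proof -
  let ?I = "prefix_IndNZn NZ n N ys"
  let ?term = "\<lambda>xs i. s * (v (hist_of xs (Suc i)) - \<eta>) - hoeffding_exponent s"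
  have "?term (ys @ [(q', a')]) i = ?term ys i" if "i \<in> ?I" for i
    using that len by (simp add: prefix_IndNZn_def hist_of_append)
  then have old_terms: "(\<Sum>i\<in>?I. ?term (ys @ [(q', a')]) i) = (\<Sum>i\<in>?I. ?term ys i)"
    by (rule sum.cong[OF refl])
  have "N \<notin> ?I"
    by (simp add: prefix_IndNZn_def)
  have snoc_eq: "prefix_IndNZn NZ n (Suc N) (ys @ [(q', a')]) = prefix_IndNZn NZ n (Suc N) ys"
    using len by (simp add: prefix_IndNZn_append)
  show ?thesis
  proof (cases "N \<in> prefix_IndNZn NZ n (Suc N) ys")
    case True
    then have "prefix_IndNZn NZ n (Suc N) (ys @ [(q', a')]) = insert N ?I"
      unfolding snoc_eq by (metis prefix_IndNZn_Suc)
    then have "exp_supermartingale s n (Suc N) (ys @ [(q', a')])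
        = exp (?term (ys @ [(q', a')]) N + (\<Sum>i\<in>?I. ?term ys i))"
      using \<open>N \<notin> ?I\<close> old_terms by (simp add: exp_supermartingale_def finite_prefix_IndNZn)
    with True show ?thesis
      by (simp add: exp_supermartingale_def exp_add hist_of_snoc[OF len])
  next
    case False
    then have "prefix_IndNZn NZ n (Suc N) (ys @ [(q', a')]) = ?I"
      unfolding snoc_eq by (metis prefix_IndNZn_Suc)
    with False old_terms show ?thesis
      by (simp add: exp_supermartingale_def)
  qed
qed

lemma exp_supermartingale_step:
  assumes len: "length ys = Suc N" and "s > 0"
  shows "(\<Sum>p\<in>UNIV. prefix_prob \<delta> \<sigma> q (ys @ [p]) * exp_supermartingale s n (Suc N) (ys @ [p]))
         \<le> prefix_prob \<delta> \<sigma> q ys * exp_supermartingale s n N ys" (is "_ \<le> ?C")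
proof -
  define h where "h = hist_of ys N"
  define \<alpha> where "\<alpha> = snd (ys ! N)"
  define factor where "factor q' =
    (if N \<in> prefix_IndNZn NZ n (Suc N) ys
     then exp (s * (v (fst h, snd h @ [(\<alpha>, q')]) - \<eta>) - hoeffding_exponent s) else 1)" for q'
  have last_h: "last_state h = fst (ys ! N)"
    unfolding h_def using len by (simp add: last_state_hist_of)
  have factor_le: "(\<Sum>q'\<in>UNIV. pmf (\<delta> (fst (ys ! N)) \<alpha>) q' * factor q') \<le> 1"
  proof (cases "N \<in> prefix_IndNZn NZ n (Suc N) ys")
    case True
    then have "(last_state h, \<alpha>) \<in> NZ"
      by (simp add: prefix_IndNZn_def last_h \<alpha>_def)
    from sum_exp_valuation_step_le_1[OF this \<open>s > 0\<close>] True show ?thesis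
      by (simp add: factor_def last_h)
  qed (simp add: factor_def sum_pmf_eq_1)
  have "(\<Sum>p\<in>UNIV. prefix_prob \<delta> \<sigma> q (ys @ [p]) * exp_supermartingale s n (Suc N) (ys @ [p]))
      = (\<Sum>q'\<in>UNIV. \<Sum>a'\<in>UNIV. prefix_prob \<delta> \<sigma> q (ys @ [(q', a')])
           * exp_supermartingale s n (Suc N) (ys @ [(q', a')]))"
    by (simp add: sum.cartesian_product split_beta)
  also have "\<dots> = (\<Sum>q'\<in>UNIV. \<Sum>a'\<in>UNIV. (?C * (pmf (\<delta> (fst (ys ! N)) \<alpha>) q' * factor q'))
      * pmf (\<sigma> (fst h, snd h @ [(\<alpha>, q')])) a')"
    unfolding prefix_prob_snoc[OF len] exp_supermartingale_snoc[OF len] hist_of_snoc[OF len]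
      factor_def h_def \<alpha>_def
    by (simp add: mult_ac)
  also have "\<dots> = (\<Sum>q'\<in>UNIV. ?C * (pmf (\<delta> (fst (ys ! N)) \<alpha>) q' * factor q'))"
    by (simp add: sum_distrib_left[symmetric] sum_pmf_eq_1)
  also have "\<dots> \<le> ?C"
    using factor_le by (simp add: sum_distrib_left[symmetric] mult_left_le
        mult_nonneg_nonneg prefix_prob_nonneg exp_supermartingale_nonneg)
  finally show ?thesis .
qed

lemma sum_prefix_prob_exp_supermartingale_le_1:
  fixes P :: "('q \<times> 'a) stream measure"
  assumes "induced_measure \<delta> \<sigma> q P" and "s > 0"
  shows "(\<Sum>xs | length xs = Suc T. prefix_prob \<delta> \<sigma> q xs * exp_supermartingale s n T xs) \<le> 1"
proof (induction T)
  case 0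
  show ?case
    using sum_prefix_prob_eq_1[OF assms(1)] by simp
next
  case (Suc N)
  have "(\<Sum>xs | length xs = Suc (Suc N). prefix_prob \<delta> \<sigma> q xs * exp_supermartingale s n (Suc N) xs)
      = (\<Sum>ys | length ys = Suc N. \<Sum>p\<in>UNIV.
           prefix_prob \<delta> \<sigma> q (ys @ [p]) * exp_supermartingale s n (Suc N) (ys @ [p]))"
    by (rule sum_lists_length_Suc)
  also have "\<dots> \<le> (\<Sum>ys | length ys = Suc N. prefix_prob \<delta> \<sigma> q ys * exp_supermartingale s n N ys)"
    using \<open>s > 0\<close> by (intro sum_mono exp_supermartingale_step) simp
  also have "\<dots> \<le> 1"
    by (fact Suc.IH)
  finally show ?case .
qed

lemma prefix_payoff_le: "prefix_payoff NZ v n M T xs \<le> max (real n * b) (- M)"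
proof (cases "card (prefix_IndNZn NZ n T xs) = n")
  case True
  have "(\<Sum>i\<in>prefix_IndNZn NZ n T xs. v (hist_of xs (Suc i)))
      \<le> real (card (prefix_IndNZn NZ n T xs)) * b"
    using valuation_range by (intro sum_bounded_above) auto
  with True show ?thesis
    by (simp add: prefix_payoff_def)
qed (simp add: prefix_payoff_def)

lemma exp_prefix_payoff_le:
  "exp (s * (prefix_payoff NZ v n M T xs - real n * \<eta>))
     \<le> exp (real n * hoeffding_exponent s) * exp_supermartingale s n T xs
        + real n * exp (s * (- M - real n * \<eta>))"
proof (cases "card (prefix_IndNZn NZ n T xs) = n")
  case True
  then have "(\<Sum>i\<in>prefix_IndNZn NZ n T xs. s * (v (hist_of xs (Suc i)) - \<eta>) - hoeffding_exponent s)
      = s * (prefix_payoff NZ v n M T xs - real n * \<eta>) - real n * hoeffding_exponent s"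
    by (simp add: prefix_payoff_def sum_subtractf sum_distrib_left algebra_simps)
  then have "exp (real n * hoeffding_exponent s) * exp_supermartingale s n T xs
      = exp (s * (prefix_payoff NZ v n M T xs - real n * \<eta>))"
    by (simp add: exp_supermartingale_def exp_add[symmetric])
  then show ?thesis
    by simp
next
  case False
  then have "n \<ge> 1"
    by (cases n) auto
  then have "exp (s * (- M - real n * \<eta>)) \<le> real n * exp (s * (- M - real n * \<eta>))"
    by simp
  with False show ?thesis
    by (simp add: prefix_payoff_def add_increasing exp_supermartingale_nonneg)
qed

lemma integral_exp_prefix_payoff_le:
  fixes P :: "('q \<times> 'a) stream measure"
  assumes "induced_measure \<delta> \<sigma> q P" and "s > 0"
  shows "(\<integral>\<rho>. exp (s * (prefix_payoff NZ v n M T (stake (Suc T) \<rho>) - real n * \<eta>)) \<partial>P)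
           \<le> exp (real n * hoeffding_exponent s) + real n * exp (s * (- M - real n * \<eta>))"
proof -
  let ?c = "real n * exp (s * (- M - real n * \<eta>))"
  let ?lists = "{xs. length xs = Suc T}"
  have "(\<integral>\<rho>. exp (s * (prefix_payoff NZ v n M T (stake (Suc T) \<rho>) - real n * \<eta>)) \<partial>P)
      = (\<Sum>xs\<in>?lists. exp (s * (prefix_payoff NZ v n M T xs - real n * \<eta>)) * prefix_prob \<delta> \<sigma> q xs)"
    by (rule integral_stake_eq_sum[OF assms(1)])
  also have "\<dots> \<le> (\<Sum>xs\<in>?lists.
      (exp (real n * hoeffding_exponent s) * exp_supermartingale s n T xs + ?c) * prefix_prob \<delta> \<sigma> q xs)"
    by (intro sum_mono mult_right_mono exp_prefix_payoff_le prefix_prob_nonneg)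
  also have "\<dots> = exp (real n * hoeffding_exponent s)
        * (\<Sum>xs\<in>?lists. prefix_prob \<delta> \<sigma> q xs * exp_supermartingale s n T xs)
      + ?c * (\<Sum>xs\<in>?lists. prefix_prob \<delta> \<sigma> q xs)"
    by (simp add: sum.distrib sum_distrib_left sum_distrib_right algebra_simps)
  also have "\<dots> \<le> exp (real n * hoeffding_exponent s) * 1 + ?c * 1"
    using sum_prefix_prob_exp_supermartingale_le_1[OF assms] sum_prefix_prob_eq_1[OF assms(1)]
    by simp
  finally show ?thesis
    by simp
qed

theorem integral_exp_f_v_le:
  fixes P :: "('q \<times> 'a) stream measure"
  assumes "induced_measure \<delta> \<sigma> q P" and "s > 0"
  shows "(\<integral>\<rho>. exp (s * (f_v NZ v n M \<rho> - real n * \<eta>)) \<partial>P)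
           \<le> exp (real n * hoeffding_exponent s) + real n * exp (s * (- M - real n * \<eta>))"
proof (rule integral_le_of_eventually_eq)
  show "finite_measure P"
    using assms(1) by (simp add: induced_measure_def prob_space_def)
  show "(\<lambda>\<rho>. exp (s * (prefix_payoff NZ v n M T (stake (Suc T) \<rho>) - real n * \<eta>)))
      \<in> borel_measurable P" for T
    using measurable_stake_induced_measure[OF assms(1)] by (rule measurable_compose) simp
  show "\<bar>exp (s * (prefix_payoff NZ v n M T (stake (Suc T) \<rho>) - real n * \<eta>))\<bar>
      \<le> exp (s * (max (real n * b) (- M) - real n * \<eta>))" for T \<rho>
    using prefix_payoff_le \<open>s > 0\<close> by simp
  show "eventually (\<lambda>T. exp (s * (prefix_payoff NZ v n M T (stake (Suc T) \<rho>) - real n * \<eta>))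
      = exp (s * (f_v NZ v n M \<rho> - real n * \<eta>))) sequentially" for \<rho>
    using eventually_prefix_payoff_stake[of NZ v n M \<rho>] by (rule eventually_mono) simp
qed (rule integral_exp_prefix_payoff_le[OF assms])

end

theorem mainTheorem13:
  fixes \<delta> :: "'q::finite \<Rightarrow> 'a::finite \<Rightarrow> 'q pmf"
    and q :: 'q and a b \<eta> :: real
    and NZ :: "('q \<times> 'a) set" and v :: "('q,'a) fin_run \<Rightarrow> real"
  assumes "a < 0" "0 < b" "a \<le> \<eta>" "\<eta> \<le> 0"
    and "\<forall>h. a \<le> v h \<and> v h \<le> b"
    and "eta_bounded \<delta> \<eta> NZ v"
  shows "\<forall>(s::real) (n::nat) (M::real) (\<sigma>::('q,'a) fin_run \<Rightarrow> 'a pmf) P.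
           s > 0 \<longrightarrow> M \<ge> 0 \<longrightarrow> induced_measure \<delta> \<sigma> q P \<longrightarrow>
           (\<integral>\<rho>. exp (s * (f_v NZ v n M \<rho> - real n * \<eta>)) \<partial>P)
             \<le> exp (real n * (s\<^sup>2 * (b - a)\<^sup>2 / 8))
                + real n * exp (s * (- M + real n * max \<bar>a\<bar> \<bar>b\<bar>) + real n * (s\<^sup>2 * (b - a)\<^sup>2 / 8))"
proof (intro allI impI)
  fix s M :: real and n :: nat and \<sigma> :: "('q,'a) fin_run \<Rightarrow> 'a pmf" and P
  assume "s > 0" "M \<ge> 0" and P: "induced_measure \<delta> \<sigma> q P"
  interpret eta_bounded_valuation \<delta> NZ v a b \<eta>
    using assms(5,6) by unfold_locales auto
  have "- \<eta> \<le> max \<bar>a\<bar> \<bar>b\<bar>"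
    using \<open>a \<le> \<eta>\<close> by linarith
  then have "real n * (- \<eta>) \<le> real n * max \<bar>a\<bar> \<bar>b\<bar>"
    by (rule mult_left_mono) simp
  then have "s * (- M - real n * \<eta>) \<le> s * (- M + real n * max \<bar>a\<bar> \<bar>b\<bar>)"
    using \<open>s > 0\<close> by (intro mult_left_mono) auto
  moreover have "0 \<le> real n * hoeffding_exponent s"
    by simp
  ultimately have
    "s * (- M - real n * \<eta>) \<le> s * (- M + real n * max \<bar>a\<bar> \<bar>b\<bar>) + real n * hoeffding_exponent s"
    by linarith
  then have "real n * exp (s * (- M - real n * \<eta>))
      \<le> real n * exp (s * (- M + real n * max \<bar>a\<bar> \<bar>b\<bar>) + real n * hoeffding_exponent s)"
    by (intro mult_left_mono) auto
  with integral_exp_f_v_le[OF P \<open>s > 0\<close>, of n M]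
  show "(\<integral>\<rho>. exp (s * (f_v NZ v n M \<rho> - real n * \<eta>)) \<partial>P)
      \<le> exp (real n * hoeffding_exponent s)
         + real n * exp (s * (- M + real n * max \<bar>a\<bar> \<bar>b\<bar>) + real n * hoeffding_exponent s)"
    by linarith
qed

end
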